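(* Let $H\ge1$, $d_0=d_x$, $d_{H+1}=d_y$, and widths $d_1,\dots,d_H$ with $d_j\ge\min\{d_x,d_y\}$ for all $j$. For $W_j\in\mathbb{R}^{d_j\times d_{j-1}}$, $j\in[H+1]$, write $W_{H+1:1}=W_{H+1}W_H\cdots W_1$. Let $\ell_0:\mathbb{R}^{d_y\times d_x}\to\mathbb{R}$ be differentiable and assume every critical point of $\ell_0$ is a global minimum (resp. global maximum) of $\ell_0$. Define $\ell((W_j)_{j=1}^{H+1})=\ell_0(W_{H+1:1})$. Then for any critical point $(\hat W_j)_{j=1}^{H+1}$ of $\ell$: if $\nabla\ell_0(\hat W_{H+1:1})\ne0$ then $(\hat W_j)_{j=1}^{H+1}$ is a saddle point of $\ell$, and if $\nabla\ell_0(\hat W_{H+1:1})=0$ then $(\hat W_j)_{j=1}^{H+1}$ is a global minimum (resp. global maximum) of $\ell$.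
   Context: A saddle point is a critical point that is neither a local minimum nor a local maximum. $[a]=\{1,\dots,a\}$. *)

theory Defs
  imports Complex_Main
begin

definition sp :: "'i set \<Rightarrow> ('i \<Rightarrow> real) set" where
  "sp I = {x. \<forall>a. a \<notin> I \<longrightarrow> x a = 0}"

definition ip :: "'i set \<Rightarrow> ('i \<Rightarrow> real) \<Rightarrow> ('i \<Rightarrow> real) \<Rightarrow> real" where
  "ip I x y = (\<Sum>a\<in>I. x a * y a)"

definition nrm :: "'i set \<Rightarrow> ('i \<Rightarrow> real) \<Rightarrow> real" where
  "nrm I x = sqrt (ip I x x)"

definition has_grad :: "'i set \<Rightarrow> (('i \<Rightarrow> real) \<Rightarrow> real) \<Rightarrow> ('i \<Rightarrow> real) \<Rightarrow> ('i \<Rightarrow> real) \<Rightarrow> bool" where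
  "has_grad I f x g \<longleftrightarrow> g \<in> sp I \<and>
     (\<forall>e>0. \<exists>\<delta>>0. \<forall>y\<in>sp I. nrm I (y - x) < \<delta> \<longrightarrow>
        \<bar>f y - f x - ip I g (y - x)\<bar> \<le> e * nrm I (y - x))"

definition differentiable_at_sp :: "'i set \<Rightarrow> (('i \<Rightarrow> real) \<Rightarrow> real) \<Rightarrow> ('i \<Rightarrow> real) \<Rightarrow> bool" where
  "differentiable_at_sp I f x \<longleftrightarrow> (\<exists>g. has_grad I f x g)"

definition grad :: "'i set \<Rightarrow> (('i \<Rightarrow> real) \<Rightarrow> real) \<Rightarrow> ('i \<Rightarrow> real) \<Rightarrow> ('i \<Rightarrow> real)" where
  "grad I f x = (THE g. has_grad I f x g)"

definition critical :: "'i set \<Rightarrow> (('i \<Rightarrow> real) \<Rightarrow> real) \<Rightarrow> ('i \<Rightarrow> real) \<Rightarrow> bool" where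
  "critical I f x \<longleftrightarrow> x \<in> sp I \<and> has_grad I f x (\<lambda>_. 0)"

definition local_min :: "'i set \<Rightarrow> (('i \<Rightarrow> real) \<Rightarrow> real) \<Rightarrow> ('i \<Rightarrow> real) \<Rightarrow> bool" where
  "local_min I f x \<longleftrightarrow> x \<in> sp I \<and>
     (\<exists>\<delta>>0. \<forall>y\<in>sp I. nrm I (y - x) < \<delta> \<longrightarrow> f x \<le> f y)"

definition local_max :: "'i set \<Rightarrow> (('i \<Rightarrow> real) \<Rightarrow> real) \<Rightarrow> ('i \<Rightarrow> real) \<Rightarrow> bool" where
  "local_max I f x \<longleftrightarrow> x \<in> sp I \<and>
     (\<exists>\<delta>>0. \<forall>y\<in>sp I. nrm I (y - x) < \<delta> \<longrightarrow> f y \<le> f x)"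

definition saddle :: "'i set \<Rightarrow> (('i \<Rightarrow> real) \<Rightarrow> real) \<Rightarrow> ('i \<Rightarrow> real) \<Rightarrow> bool" where
  "saddle I f x \<longleftrightarrow> critical I f x \<and> \<not> local_min I f x \<and> \<not> local_max I f x"

definition global_min :: "'i set \<Rightarrow> (('i \<Rightarrow> real) \<Rightarrow> real) \<Rightarrow> ('i \<Rightarrow> real) \<Rightarrow> bool" where
  "global_min I f x \<longleftrightarrow> x \<in> sp I \<and> (\<forall>y\<in>sp I. f x \<le> f y)"

definition global_max :: "'i set \<Rightarrow> (('i \<Rightarrow> real) \<Rightarrow> real) \<Rightarrow> ('i \<Rightarrow> real) \<Rightarrow> bool" where
  "global_max I f x \<longleftrightarrow> x \<in> sp I \<and> (\<forall>y\<in>sp I. f y \<le> f x)"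

text \<open>Matrices: an m x n real matrix is an element of sp (MI m n), entries A (i,k).\<close>
definition MI :: "nat \<Rightarrow> nat \<Rightarrow> (nat \<times> nat) set" where
  "MI m n = {(i, k). i < m \<and> k < n}"

definition idm :: "nat \<Rightarrow> (nat \<times> nat \<Rightarrow> real)" where
  "idm n = (\<lambda>(i, k). if i < n \<and> i = k then 1 else 0)"

definition mmul :: "nat \<Rightarrow> nat \<Rightarrow> nat \<Rightarrow> (nat \<times> nat \<Rightarrow> real) \<Rightarrow> (nat \<times> nat \<Rightarrow> real) \<Rightarrow> (nat \<times> nat \<Rightarrow> real)" where
  "mmul m p n A B = (\<lambda>(i, k). if i < m \<and> k < n then (\<Sum>l<p. A (i, l) * B (l, k)) else 0)"

text \<open>Parameters (W_j)_{j=1}^{H+1} with W_j of size d j x d (j-1), encoded as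
  W (j, i, k) = (W_j)_{ik}.\<close>
definition PI :: "(nat \<Rightarrow> nat) \<Rightarrow> nat \<Rightarrow> (nat \<times> nat \<times> nat) set" where
  "PI d H = {(j, i, k). 1 \<le> j \<and> j \<le> H + 1 \<and> i < d j \<and> k < d (j - 1)}"

definition layer :: "(nat \<times> nat \<times> nat \<Rightarrow> real) \<Rightarrow> nat \<Rightarrow> (nat \<times> nat \<Rightarrow> real)" where
  "layer W j = (\<lambda>(i, k). W (j, i, k))"

fun prodW :: "(nat \<Rightarrow> nat) \<Rightarrow> (nat \<times> nat \<times> nat \<Rightarrow> real) \<Rightarrow> nat \<Rightarrow> (nat \<times> nat \<Rightarrow> real)" where
  "prodW d W 0 = idm (d 0)"
| "prodW d W (Suc j) = mmul (d (Suc j)) (d j) (d 0) (layer W (Suc j)) (prodW d W j)"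

end

theory Submission
  imports Defs "HOL-Analysis.L2_Norm"
begin

text \<open>Let g be the gradient of l0 at the product W_(H+1:1) of a critical point W.
  If g \<noteq> 0, then W is no local extremum: the fibre of the product map through W
  contains points W' arbitrarily close to W at which some partial derivative
  \<langle>g, \<partial>W_(H+1:1) / \<partial>(W_j)_ab\<rangle> is nonzero, and since the product is
  affine in each single weight, moving that weight up or down lowers resp. raises
  the loss. Such a W' is found layer by layer. If all d_j \<ge> d_y, follow
  g W_(k:1)^T for k = 0, 1, ...: if the layer gradient at layer k+1 vanishes while
  g W_(k:1)^T does not, then W_(H+1:k+1) has a nonzero kernel vector z (as
  d_y \<le> d_(k+1)), and adding a small multiple of z e^T to W_(k+1) keeps the
  product but makes g W_(k+1:1)^T nonzero. The case of all d_j \<ge> d_x is the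
  mirror image. If g = 0, then W_(H+1:1) is a critical point, hence a global
  optimum, of l0, and W is a global optimum of the loss.\<close>

section \<open>Norms and gradients on coordinate spaces\<close>

lemma nrm_eq_L2_set: "nrm I x = L2_set x I"
  unfolding nrm_def ip_def L2_set_def by (simp add: power2_eq_square)

lemma nrm_nonneg: "0 \<le> nrm I x"
  unfolding nrm_eq_L2_set by simp

lemma nrm_zero: "nrm I (\<lambda>_. 0) = 0"
  unfolding nrm_def ip_def by simp

lemma nrm_pos: "finite I \<Longrightarrow> a \<in> I \<Longrightarrow> x a \<noteq> 0 \<Longrightarrow> 0 < nrm I x"
  unfolding nrm_eq_L2_set using L2_set_eq_0_iff[of I x] L2_set_nonneg[of x I]
  by (metis less_eq_real_def)

lemma nrm_scale: "nrm I (\<lambda>a. c * x a) = \<bar>c\<bar> * nrm I x"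
proof -
  have "nrm I (\<lambda>a. c * x a) = L2_set (\<lambda>a. \<bar>c\<bar> * \<bar>x a\<bar>) I"
    unfolding nrm_eq_L2_set L2_set_def by (simp add: power_mult_distrib)
  also have "\<dots> = \<bar>c\<bar> * L2_set (\<lambda>a. \<bar>x a\<bar>) I"
    by (simp add: L2_set_right_distrib)
  finally show ?thesis
    unfolding nrm_eq_L2_set L2_set_def by simp
qed

lemma nrm_diff_triangle: "nrm I (x - z) \<le> nrm I (x - y) + nrm I (y - z)"
proof -
  have "x - z = (\<lambda>a. (x - y) a + (y - z) a)" by (simp add: fun_eq_iff)
  then show ?thesis
    unfolding nrm_eq_L2_set using L2_set_triangle_ineq[of "x - y" "y - z" I] by simp
qed

lemma nrm_single_le:
  assumes "finite I"
  shows "nrm I (\<lambda>a. if a = p then c else 0) \<le> \<bar>c\<bar>"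
proof -
  have "ip I (\<lambda>a. if a = p then c else 0) (\<lambda>a. if a = p then c else 0) = (if p \<in> I then c * c else 0)"
    unfolding ip_def using assms by (simp add: if_distrib sum.delta cong: if_cong)
  moreover have "sqrt (c * c) = \<bar>c\<bar>" by (metis power2_eq_square real_sqrt_abs)
  ultimately show ?thesis unfolding nrm_def by auto
qed

lemma exists_small_multiple: "0 < \<epsilon> \<Longrightarrow> \<exists>\<eta>>0. nrm I (\<lambda>a. \<eta> * x a) < \<epsilon>"
proof -
  assume e: "0 < \<epsilon>"
  define \<eta> where "\<eta> = \<epsilon> / (2 * (nrm I x + 1))"
  have n: "0 \<le> nrm I x" by (rule nrm_nonneg)
  have "\<eta> > 0" using e n by (simp add: \<eta>_def)
  have "\<eta> * nrm I x = \<epsilon> * (nrm I x / (2 * (nrm I x + 1)))" by (simp add: \<eta>_def)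
  also have "\<dots> < \<epsilon> * 1"
    using e n by (intro mult_strict_left_mono) (auto simp: field_simps)
  finally have "nrm I (\<lambda>a. \<eta> * x a) < \<epsilon>" using \<open>\<eta> > 0\<close> by (simp add: nrm_scale)
  with \<open>\<eta> > 0\<close> show ?thesis by blast
qed

lemma ip_diff_left: "ip I (f - g) h = ip I f h - ip I g h"
  unfolding ip_def by (simp add: sum_subtractf left_diff_distrib)

lemma ip_uminus_left: "ip I (- f) h = - ip I f h"
  unfolding ip_def by (simp add: sum_negf)

lemma ip_scale_right: "ip I f (\<lambda>a. c * h a) = c * ip I f h"
  unfolding ip_def by (simp add: sum_distrib_left mult_ac)

lemma ip_self: "ip I h h = (nrm I h)\<^sup>2"
  unfolding nrm_def ip_def by (simp add: sum_nonneg)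

lemma finite_PI: "finite (PI d H)"
proof -
  let ?M = "\<Sum>j\<le>H + 1. d j"
  have "PI d H \<subseteq> {..H + 1} \<times> {..<?M} \<times> {..<?M}"
  proof
    fix x assume "x \<in> PI d H"
    then obtain j i k where x: "x = (j, i, k)" "j \<le> H + 1" "i < d j" "k < d (j - 1)"
      unfolding PI_def by auto
    have "d j \<le> ?M" by (rule member_le_sum) (use x in auto)
    moreover have "d (j - 1) \<le> ?M" by (rule member_le_sum) (use x in auto)
    ultimately show "x \<in> {..H + 1} \<times> {..<?M} \<times> {..<?M}" using x by auto
  qed
  then show ?thesis by (rule finite_subset) auto
qed

lemma finite_MI: "finite (MI m n)"
proof -
  have "MI m n \<subseteq> {..<m} \<times> {..<n}" unfolding MI_def by auto
  then show ?thesis by (rule finite_subset) auto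
qed

lemma has_grad_uminus: "has_grad I f x g \<Longrightarrow> has_grad I (\<lambda>y. - f y) x (- g)"
proof -
  have "\<bar>- a - - b - - c\<bar> = \<bar>a - b - c\<bar>" for a b c :: real by arith
  then show "has_grad I f x g \<Longrightarrow> has_grad I (\<lambda>y. - f y) x (- g)"
    unfolding has_grad_def sp_def ip_uminus_left by simp
qed

lemma has_grad_exists_lower:
  assumes grad: "has_grad I f x g" and x: "x \<in> sp I" and v: "v \<in> sp I"
    and h0: "ip I g v \<noteq> 0" and \<delta>: "\<delta> > 0"
  shows "\<exists>c. \<bar>c\<bar> < \<delta> \<and> f (\<lambda>a. x a + c * v a) < f x"
proof -
  define h where "h = ip I g v"
  define n where "n = nrm I v"
  have n: "0 \<le> n" unfolding n_def by (rule nrm_nonneg)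
  define e where "e = \<bar>h\<bar> / (2 * (n + 1))"
  have e: "e > 0" using h0 n unfolding e_def h_def by simp
  obtain \<delta>1 where \<delta>1: "\<delta>1 > 0" and lin: "\<forall>y\<in>sp I. nrm I (y - x) < \<delta>1 \<longrightarrow>
        \<bar>f y - f x - ip I g (y - x)\<bar> \<le> e * nrm I (y - x)"
    using grad e unfolding has_grad_def by blast
  define t where "t = min (\<delta>1 / (n + 1)) \<delta> / 2"
  have t: "t > 0" "t < \<delta>" using \<delta> \<delta>1 n by (auto simp: t_def)
  have "t \<le> \<delta>1 / (n + 1) / 2" unfolding t_def by (intro divide_right_mono) auto
  then have "t * (n + 1) \<le> \<delta>1 / 2" using n by (simp add: field_simps)
  then have tn: "t * n < \<delta>1" using \<delta>1 t by (simp add: algebra_simps)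
  define c where "c = - sgn h * t"
  define xc where "xc = (\<lambda>a. x a + c * v a)"
  have abs_c: "\<bar>c\<bar> = t" using h0 t by (auto simp: c_def h_def abs_mult)
  have "sgn h * h = \<bar>h\<bar>" by (simp add: sgn_if)
  then have ch: "c * h = - t * \<bar>h\<bar>" by (simp add: c_def mult_ac)
  have xc_sp: "xc \<in> sp I" using x v unfolding xc_def sp_def by auto
  have xc_diff: "xc - x = (\<lambda>a. c * v a)" unfolding xc_def by (simp add: fun_eq_iff)
  have n_step: "nrm I (xc - x) = t * n" unfolding xc_diff nrm_scale abs_c n_def ..
  have ip_step: "ip I g (xc - x) = c * h" unfolding xc_diff ip_scale_right h_def ..
  have "nrm I (xc - x) < \<delta>1" using tn n_step by simp
  then have "\<bar>f xc - f x - ip I g (xc - x)\<bar> \<le> e * nrm I (xc - x)"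
    using lin xc_sp by blast
  then have "\<bar>f xc - f x - c * h\<bar> \<le> e * (t * n)" unfolding n_step ip_step .
  moreover have "e * (t * n) = t * \<bar>h\<bar> * (n / (2 * (n + 1)))" by (simp add: e_def)
  moreover have "\<dots> \<le> t * \<bar>h\<bar> * (1 / 2)"
    using t n by (intro mult_left_mono) (auto simp: field_simps)
  ultimately have "f xc - f x \<le> - t * \<bar>h\<bar> / 2" unfolding ch by linarith
  also have "\<dots> < 0" using t h0 unfolding h_def by simp
  finally have "\<bar>c\<bar> < \<delta> \<and> f xc < f x" using abs_c t by simp
  then show ?thesis unfolding xc_def by (rule exI)
qed

lemma has_grad_diff:
  assumes g1: "has_grad I f x g1" and g2: "has_grad I f x g2"
  shows "has_grad I (\<lambda>_. 0) x (g1 - g2)"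
  unfolding has_grad_def
proof (intro conjI allI impI)
  have "g1 \<in> sp I" "g2 \<in> sp I" using g1 g2 unfolding has_grad_def by blast+
  then show "g1 - g2 \<in> sp I" unfolding sp_def by simp
  fix e :: real assume "e > 0"
  then have "e / 2 > 0" by simp
  then obtain \<delta>1 where "\<delta>1 > 0"
    and lin1: "\<forall>y\<in>sp I. nrm I (y - x) < \<delta>1 \<longrightarrow> \<bar>f y - f x - ip I g1 (y - x)\<bar> \<le> e / 2 * nrm I (y - x)"
    using g1 unfolding has_grad_def by blast
  obtain \<delta>2 where "\<delta>2 > 0"
    and lin2: "\<forall>y\<in>sp I. nrm I (y - x) < \<delta>2 \<longrightarrow> \<bar>f y - f x - ip I g2 (y - x)\<bar> \<le> e / 2 * nrm I (y - x)"
    using g2 \<open>e / 2 > 0\<close> unfolding has_grad_def by blast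
  show "\<exists>\<delta>>0. \<forall>y\<in>sp I. nrm I (y - x) < \<delta> \<longrightarrow> \<bar>0 - 0 - ip I (g1 - g2) (y - x)\<bar> \<le> e * nrm I (y - x)"
  proof (intro exI[of _ "min \<delta>1 \<delta>2"] conjI ballI impI)
    fix y assume "y \<in> sp I" "nrm I (y - x) < min \<delta>1 \<delta>2"
    then have "\<bar>f y - f x - ip I g1 (y - x)\<bar> \<le> e / 2 * nrm I (y - x)"
      and "\<bar>f y - f x - ip I g2 (y - x)\<bar> \<le> e / 2 * nrm I (y - x)"
      using lin1 lin2 by auto
    then show "\<bar>0 - 0 - ip I (g1 - g2) (y - x)\<bar> \<le> e * nrm I (y - x)"
      unfolding ip_diff_left by arith
  qed (use \<open>\<delta>1 > 0\<close> \<open>\<delta>2 > 0\<close> in simp)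
qed

lemma has_grad_unique:
  assumes fin: "finite I" and x: "x \<in> sp I"
    and g1: "has_grad I f x g1" and g2: "has_grad I f x g2"
  shows "g1 = g2"
proof (rule ccontr)
  assume "g1 \<noteq> g2"
  then obtain a where "g1 a \<noteq> g2 a" by (meson ext)
  then have a: "(g1 - g2) a \<noteq> 0" by simp
  have grad0: "has_grad I (\<lambda>_. 0) x (g1 - g2)" using g1 g2 by (rule has_grad_diff)
  then have h: "g1 - g2 \<in> sp I" unfolding has_grad_def by blast
  with a have "a \<in> I" unfolding sp_def by blast
  with a have "0 < nrm I (g1 - g2)" by (intro nrm_pos[OF fin])
  then have "ip I (g1 - g2) (g1 - g2) \<noteq> 0" unfolding ip_self by simp
  txt \<open>The constant function cannot decrease along g1 - g2.\<close>
  from has_grad_exists_lower[OF grad0 x h this zero_less_one] show False by simp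
qed

lemma has_grad_grad:
  assumes "finite I" "x \<in> sp I" "differentiable_at_sp I f x"
  shows "has_grad I f x (grad I f x)"
proof -
  obtain g where "has_grad I f x g"
    using assms(3) unfolding differentiable_at_sp_def by blast
  with has_grad_unique[OF assms(1,2)] have "\<exists>!g. has_grad I f x g" by blast
  then show ?thesis unfolding grad_def by (rule theI')
qed

section \<open>Products of layers\<close>

lemma mmul_apply:
  "mmul m p n A B (i, k) = (if i < m \<and> k < n then (\<Sum>l<p. A (i, l) * B (l, k)) else 0)"
  unfolding mmul_def by simp

lemma mmul_assoc: "mmul m p n A (mmul p q n B C) = mmul m q n (mmul m p q A B) C"
proof (rule ext, clarify)
  fix i k
  show "mmul m p n A (mmul p q n B C) (i, k) = mmul m q n (mmul m p q A B) C (i, k)"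
  proof (cases "i < m \<and> k < n")
    case True
    have "(\<Sum>l<p. A (i, l) * mmul p q n B C (l, k)) = (\<Sum>l<p. \<Sum>r<q. A (i, l) * B (l, r) * C (r, k))"
      using True by (intro sum.cong) (auto simp: mmul_apply sum_distrib_left mult_ac)
    also have "\<dots> = (\<Sum>r<q. \<Sum>l<p. A (i, l) * B (l, r) * C (r, k))"
      by (rule sum.swap)
    also have "\<dots> = (\<Sum>r<q. mmul m p q A B (i, r) * C (r, k))"
      using True by (intro sum.cong) (auto simp: mmul_apply sum_distrib_right)
    finally show ?thesis using True by (simp add: mmul_apply)
  qed (auto simp: mmul_apply)
qed

lemma mmul_add_left: "mmul m p n (\<lambda>x. A x + B x) C = (\<lambda>x. mmul m p n A C x + mmul m p n B C x)"
  by (auto simp: fun_eq_iff mmul_apply distrib_right sum.distrib)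

lemma mmul_add_right: "mmul m p n A (\<lambda>x. B x + C x) = (\<lambda>x. mmul m p n A B x + mmul m p n A C x)"
  by (auto simp: fun_eq_iff mmul_apply distrib_left sum.distrib)

lemma idm_commute: "idm n (i, k) = idm n (k, i)"
  unfolding idm_def by auto

lemma sum_idm_left: "i < n \<Longrightarrow> (\<Sum>l<n. idm n (i, l) * f l) = f i"
proof -
  have "(\<Sum>l<n. idm n (i, l) * f l) = (\<Sum>l<n. if l = i then f i else 0)"
    by (intro sum.cong) (auto simp: idm_def)
  then show "i < n \<Longrightarrow> ?thesis" by simp
qed

lemma sum_idm_right: "k < n \<Longrightarrow> (\<Sum>l<n. f l * idm n (l, k)) = f k"
  using sum_idm_left[of k n f] by (simp add: idm_commute mult.commute)

lemma mmul_idm_left: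
  assumes "\<And>i l. \<not> (i < m \<and> l < n) \<Longrightarrow> B (i, l) = 0"
  shows "mmul m m n (idm m) B = B"
  using assms by (auto simp: fun_eq_iff mmul_apply sum_idm_left)

lemma mmul_idm_right: "mmul m n n A (idm n) = mmul m m n (idm m) A"
  by (auto simp: fun_eq_iff mmul_apply sum_idm_left sum_idm_right)

lemma layer_apply: "layer W j (i, l) = W (j, i, l)"
  unfolding layer_def by simp

lemma layer_cong: "(\<And>i l. W (j, i, l) = W' (j, i, l)) \<Longrightarrow> layer W j = layer W' j"
  unfolding layer_def by auto

lemma prodW_outside: "\<not> (i < d k \<and> l < d 0) \<Longrightarrow> prodW d W k (i, l) = 0"
  by (cases k) (auto simp: idm_def mmul_apply)

lemma prodW_in_sp: "prodW d W k \<in> sp (MI (d k) (d 0))"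
  unfolding sp_def MI_def using prodW_outside by auto

lemma prodW_Suc_apply: "l < d (Suc k) \<Longrightarrow> q < d 0 \<Longrightarrow>
   prodW d W (Suc k) (l, q) = (\<Sum>b<d k. W (Suc k, l, b) * prodW d W k (b, q))"
  by (simp add: mmul_apply layer_apply)

lemma prodW_cong:
  "(\<And>j i l. j \<le> k \<Longrightarrow> W (j, i, l) = W' (j, i, l)) \<Longrightarrow> prodW d W k = prodW d W' k"
proof (induction k)
  case (Suc k)
  have "layer W (Suc k) = layer W' (Suc k)" by (rule layer_cong) (simp add: Suc.prems)
  then show ?case using Suc by simp
qed simp

fun seg_prod :: "(nat \<Rightarrow> nat) \<Rightarrow> (nat \<times> nat \<times> nat \<Rightarrow> real) \<Rightarrow> nat \<Rightarrow> nat \<Rightarrow> (nat \<times> nat \<Rightarrow> real)" where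
  "seg_prod d W k 0 = idm (d k)"
| "seg_prod d W k (Suc n) =
     mmul (d (Suc (k + n))) (d (k + n)) (d k) (layer W (Suc (k + n))) (seg_prod d W k n)"

lemma seg_prod_outside: "\<not> (i < d (k + n) \<and> l < d k) \<Longrightarrow> seg_prod d W k n (i, l) = 0"
  by (cases n) (auto simp: idm_def mmul_apply)

lemma seg_prod_Suc_right:
  "seg_prod d W k (Suc n) = mmul (d (Suc k + n)) (d (Suc k)) (d k) (seg_prod d W (Suc k) n) (layer W (Suc k))"
proof (induction n)
  case 0
  show ?case by (simp add: mmul_idm_right)
next
  case (Suc n)
  then show ?case by (simp add: mmul_assoc)
qed

lemma prodW_add: "prodW d W (k + n) = mmul (d (k + n)) (d k) (d 0) (seg_prod d W k n) (prodW d W k)"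
proof (induction n)
  case 0
  show ?case by (simp add: mmul_idm_left prodW_outside)
next
  case (Suc n)
  then show ?case by (simp add: mmul_assoc)
qed

definition tail_prod :: "(nat \<Rightarrow> nat) \<Rightarrow> (nat \<times> nat \<times> nat \<Rightarrow> real) \<Rightarrow> nat \<Rightarrow> nat \<Rightarrow> (nat \<times> nat \<Rightarrow> real)" where
  "tail_prod d W N k = seg_prod d W k (N - k)"

lemma tail_prod_self: "tail_prod d W N N = idm (d N)"
  unfolding tail_prod_def by simp

lemma tail_prod_step:
  assumes "k < N"
  shows "tail_prod d W N k = mmul (d N) (d (Suc k)) (d k) (tail_prod d W N (Suc k)) (layer W (Suc k))"
proof -
  have "N - k = Suc (N - Suc k)" "Suc k + (N - Suc k) = N" using assms by auto
  then show ?thesis unfolding tail_prod_def by (simp only: seg_prod_Suc_right)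
qed

lemma tail_prod_step_apply: "k < N \<Longrightarrow> i < d N \<Longrightarrow> b < d k \<Longrightarrow>
   tail_prod d W N k (i, b) = (\<Sum>a<d (Suc k). tail_prod d W N (Suc k) (i, a) * W (Suc k, a, b))"
  by (simp add: tail_prod_step mmul_apply layer_apply)

lemma tail_prod_outside: "k \<le> N \<Longrightarrow> \<not> (i < d N \<and> l < d k) \<Longrightarrow> tail_prod d W N k (i, l) = 0"
  using seg_prod_outside[of i d k "N - k" l W] unfolding tail_prod_def by simp

lemma tail_prod_cong:
  assumes "\<And>j i l. k < j \<Longrightarrow> W (j, i, l) = W' (j, i, l)"
  shows "tail_prod d W N k = tail_prod d W' N k"
proof -
  have "seg_prod d W k n = seg_prod d W' k n" for n
  proof (induction n)
    case (Suc n)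
    have "layer W (Suc (k + n)) = layer W' (Suc (k + n))" by (rule layer_cong) (simp add: assms)
    then show ?case using Suc by simp
  qed simp
  then show ?thesis unfolding tail_prod_def by simp
qed

lemma prodW_eq_tail_prefix:
  "k \<le> N \<Longrightarrow> prodW d W N = mmul (d N) (d k) (d 0) (tail_prod d W N k) (prodW d W k)"
  using prodW_add[of d W k "N - k"] unfolding tail_prod_def by simp

definition add_layer :: "(nat \<times> nat \<times> nat \<Rightarrow> real) \<Rightarrow> nat \<Rightarrow> (nat \<times> nat \<Rightarrow> real) \<Rightarrow> nat \<times> nat \<times> nat \<Rightarrow> real" where
  "add_layer W j E = (\<lambda>(j', i, l). W (j', i, l) + (if j' = j then E (i, l) else 0))"

lemma add_layer_apply: "add_layer W j E (j', i, l) = W (j', i, l) + (if j' = j then E (i, l) else 0)"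
  unfolding add_layer_def by simp

lemma layer_add_layer: "layer (add_layer W j E) j = (\<lambda>x. layer W j x + E x)"
  unfolding layer_def add_layer_def by (simp add: fun_eq_iff)

lemma prodW_add_layer_below: "k < j \<Longrightarrow> prodW d (add_layer W j E) k = prodW d W k"
  by (rule prodW_cong) (simp add: add_layer_apply)

lemma tail_prod_add_layer_above: "j \<le> k \<Longrightarrow> tail_prod d (add_layer W j E) N k = tail_prod d W N k"
  by (rule tail_prod_cong) (simp add: add_layer_apply)

lemma add_layer_in_sp:
  assumes "W \<in> sp (PI d H)" "1 \<le> j" "j \<le> H + 1" "E \<in> sp (MI (d j) (d (j - 1)))"
  shows "add_layer W j E \<in> sp (PI d H)"
  using assms unfolding sp_def PI_def MI_def by (auto simp: add_layer_def)

lemma exists_small_add_layer: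
  assumes "W \<in> sp (PI d H)" "1 \<le> j" "j \<le> H + 1" "E \<in> sp (MI (d j) (d (j - 1)))" "\<epsilon> > 0"
  shows "\<exists>\<eta>>0. add_layer W j (\<lambda>x. \<eta> * E x) \<in> sp (PI d H) \<and>
    nrm (PI d H) (add_layer W j (\<lambda>x. \<eta> * E x) - W) < \<epsilon>"
proof -
  obtain \<eta> where \<eta>: "\<eta> > 0" "nrm (PI d H) (\<lambda>y. \<eta> * add_layer (\<lambda>_. 0) j E y) < \<epsilon>"
    using exists_small_multiple[OF assms(5)] by blast
  have "add_layer W j (\<lambda>x. \<eta> * E x) - W = (\<lambda>y. \<eta> * add_layer (\<lambda>_. 0) j E y)"
    by (auto simp: fun_eq_iff add_layer_def)
  moreover have "(\<lambda>x. \<eta> * E x) \<in> sp (MI (d j) (d (j - 1)))" using assms(4) unfolding sp_def by simp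
  ultimately show ?thesis using \<eta> add_layer_in_sp[OF assms(1-3)] by auto
qed

lemma prodW_add_layer:
  assumes "1 \<le> j" "j \<le> N"
  shows "prodW d (add_layer W j E) N = (\<lambda>x. prodW d W N x +
    mmul (d N) (d j) (d 0) (tail_prod d W N j) (mmul (d j) (d (j - 1)) (d 0) E (prodW d W (j - 1))) x)"
proof -
  obtain i where j: "j = Suc i" using assms(1) by (cases j) auto
  have "prodW d (add_layer W j E) j = (\<lambda>x. prodW d W j x + mmul (d j) (d i) (d 0) E (prodW d W i) x)"
    unfolding j by (simp add: layer_add_layer[of W "Suc i", unfolded j] prodW_add_layer_below mmul_add_left)
  then show ?thesis
    using prodW_eq_tail_prefix[OF assms(2), of d "add_layer W j E"] prodW_eq_tail_prefix[OF assms(2), of d W]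
    by (simp add: tail_prod_add_layer_above mmul_add_right j)
qed

lemma homogeneous_system_nontrivial_solution:
  fixes T :: "'r \<Rightarrow> 'c \<Rightarrow> real"
  assumes "finite R" "finite K" "card R < card K"
  shows "\<exists>z. (\<forall>a. a \<notin> K \<longrightarrow> z a = 0) \<and> (\<exists>a\<in>K. z a \<noteq> 0) \<and> (\<forall>i\<in>R. (\<Sum>a\<in>K. T i a * z a) = 0)"
  using assms
proof (induction R arbitrary: K T rule: finite_induct)
  case empty
  then obtain a where a: "a \<in> K" by (metis card.empty card_gt_0_iff equals0I)
  show ?case by (rule exI[of _ "\<lambda>b. if b = a then 1 else 0"]) (use a in auto)
next
  case (insert r R)
  show ?case
  proof (cases "\<forall>a\<in>K. T r a = 0")
    case True
    have "card R < card K" using insert by simp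
    then obtain z where z: "\<forall>a. a \<notin> K \<longrightarrow> z a = 0" "\<exists>a\<in>K. z a \<noteq> 0" "\<forall>i\<in>R. (\<Sum>a\<in>K. T i a * z a) = 0"
      using insert.IH[OF insert.prems(1)] by blast
    show ?thesis using z True by (intro exI[of _ z]) auto
  next
    case False
    txt \<open>Eliminate the unknown q using equation r, solve the smaller system, then recover z q.\<close>
    then obtain q where q: "q \<in> K" "T r q \<noteq> 0" by auto
    define K' where "K' = K - {q}"
    have fK': "finite K'" using insert.prems unfolding K'_def by simp
    have cK': "card R < card K'" using insert q unfolding K'_def by (simp add: card_Diff_singleton)
    obtain z' where z': "\<forall>a. a \<notin> K' \<longrightarrow> z' a = 0" "\<exists>a\<in>K'. z' a \<noteq> 0"
        "\<forall>i\<in>R. (\<Sum>a\<in>K'. (T i a - T i q * T r a / T r q) * z' a) = 0"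
      using insert.IH[OF fK' cK', of "\<lambda>i a. T i a - T i q * T r a / T r q"] by blast
    define s where "s = (\<Sum>a\<in>K'. T r a * z' a)"
    define z where "z = (\<lambda>a. if a = q then - s / T r q else z' a)"
    have sum_K: "(\<Sum>a\<in>K. T i a * z a) = (\<Sum>a\<in>K'. T i a * z' a) + T i q * z q" for i
    proof -
      have "(\<Sum>a\<in>K. T i a * z a) = T i q * z q + (\<Sum>a\<in>K'. T i a * z a)"
        unfolding K'_def using q insert.prems(1) by (simp add: sum.remove)
      moreover have "(\<Sum>a\<in>K'. T i a * z a) = (\<Sum>a\<in>K'. T i a * z' a)"
        unfolding z_def K'_def by (intro sum.cong) auto
      ultimately show ?thesis by simp
    qed
    have "(\<Sum>a\<in>K. T i a * z a) = 0" if "i \<in> R" for i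
    proof -
      have "(\<Sum>a\<in>K'. (T i a - T i q * T r a / T r q) * z' a) = (\<Sum>a\<in>K'. T i a * z' a) - T i q / T r q * s"
        unfolding s_def by (simp add: algebra_simps sum_subtractf sum_distrib_left)
      then show ?thesis unfolding sum_K using z'(3) that q unfolding z_def by (simp add: field_simps)
    qed
    moreover have "(\<Sum>a\<in>K. T r a * z a) = 0"
      unfolding sum_K using q unfolding z_def s_def by simp
    moreover have "\<forall>a. a \<notin> K \<longrightarrow> z a = 0" "\<exists>a\<in>K. z a \<noteq> 0"
      using z'(1,2) q unfolding z_def K'_def by auto
    ultimately show ?thesis by (intro exI[of _ z]) auto
  qed
qed

lemma kernel_vector_of_dependent_rows:
  fixes T :: "nat \<times> nat \<Rightarrow> real" and w :: "nat \<Rightarrow> real"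
  assumes "m \<le> dd" "i0 < m" "w i0 \<noteq> 0" "\<forall>a<dd. (\<Sum>i<m. w i * T (i, a)) = 0"
  shows "\<exists>z. (\<forall>a. \<not> a < dd \<longrightarrow> z a = 0) \<and> (\<exists>a<dd. z a \<noteq> 0) \<and> (\<forall>i<m. (\<Sum>a<dd. T (i, a) * z a) = 0)"
proof -
  define R where "R = {..<m} - {i0}"
  have "card R < card {..<dd}" unfolding R_def using assms by (simp add: card_Diff_singleton)
  then obtain z where z: "\<forall>a. a \<notin> {..<dd} \<longrightarrow> z a = 0" "\<exists>a\<in>{..<dd}. z a \<noteq> 0"
      "\<forall>i\<in>R. (\<Sum>a\<in>{..<dd}. T (i, a) * z a) = 0"
    using homogeneous_system_nontrivial_solution[of R "{..<dd}" "\<lambda>i a. T (i, a)"] unfolding R_def by auto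
  have rows: "(\<Sum>a<dd. T (i, a) * z a) = 0" if "i < m" "i \<noteq> i0" for i
    using z(3) that unfolding R_def by auto
  have "0 = (\<Sum>a<dd. (\<Sum>i<m. w i * T (i, a)) * z a)" using assms(4) by simp
  also have "\<dots> = (\<Sum>i<m. w i * (\<Sum>a<dd. T (i, a) * z a))"
    by (simp add: sum_distrib_left sum_distrib_right mult_ac sum.swap[of _ "{..<m}"])
  also have "\<dots> = (\<Sum>i<m. if i = i0 then w i0 * (\<Sum>a<dd. T (i0, a) * z a) else 0)"
    by (intro sum.cong) (auto simp: rows)
  also have "\<dots> = w i0 * (\<Sum>a<dd. T (i0, a) * z a)" using assms(2) by simp
  finally have "(\<Sum>a<dd. T (i0, a) * z a) = 0" using assms(3) by simp
  with rows z show ?thesis by auto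
qed

section \<open>Layer gradients\<close>

text \<open>In matrix notation, with g of size d (H+1) x d 0: layer_grad d H g W j is
  W_(H+1:j+1)^T g W_(j-1:1)^T, the gradient of V \<mapsto> \<langle>g, V_(H+1:1)\<rangle> with
  respect to layer j; grad_prefix d g W k is g W_(k:1)^T and grad_suffix d H g W k
  is W_(H+1:k+1)^T g.\<close>
definition layer_grad :: "(nat \<Rightarrow> nat) \<Rightarrow> nat \<Rightarrow> (nat \<times> nat \<Rightarrow> real) \<Rightarrow> (nat \<times> nat \<times> nat \<Rightarrow> real) \<Rightarrow> nat \<Rightarrow> nat \<Rightarrow> nat \<Rightarrow> real" where
  "layer_grad d H g W j a b =
     (\<Sum>i<d (Suc H). \<Sum>q<d 0. g (i, q) * tail_prod d W (Suc H) j (i, a) * prodW d W (j - 1) (b, q))"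

definition has_nonzero_layer_grad :: "(nat \<Rightarrow> nat) \<Rightarrow> nat \<Rightarrow> (nat \<times> nat \<Rightarrow> real) \<Rightarrow> (nat \<times> nat \<times> nat \<Rightarrow> real) \<Rightarrow> bool" where
  "has_nonzero_layer_grad d H g W \<longleftrightarrow>
     (\<exists>j\<in>{1..Suc H}. \<exists>a<d j. \<exists>b<d (j - 1). layer_grad d H g W j a b \<noteq> 0)"

definition grad_prefix :: "(nat \<Rightarrow> nat) \<Rightarrow> (nat \<times> nat \<Rightarrow> real) \<Rightarrow> (nat \<times> nat \<times> nat \<Rightarrow> real) \<Rightarrow> nat \<Rightarrow> nat \<Rightarrow> nat \<Rightarrow> real" where
  "grad_prefix d g W k i l = (\<Sum>q<d 0. g (i, q) * prodW d W k (l, q))"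

definition grad_suffix :: "(nat \<Rightarrow> nat) \<Rightarrow> nat \<Rightarrow> (nat \<times> nat \<Rightarrow> real) \<Rightarrow> (nat \<times> nat \<times> nat \<Rightarrow> real) \<Rightarrow> nat \<Rightarrow> nat \<Rightarrow> nat \<Rightarrow> real" where
  "grad_suffix d H g W k a q = (\<Sum>i<d (Suc H). tail_prod d W (Suc H) k (i, a) * g (i, q))"

lemma grad_prefix_Suc:
  assumes "l < d (Suc k)"
  shows "grad_prefix d g W (Suc k) i l = (\<Sum>b<d k. W (Suc k, l, b) * grad_prefix d g W k i b)"
proof -
  have "grad_prefix d g W (Suc k) i l = (\<Sum>q<d 0. \<Sum>b<d k. W (Suc k, l, b) * (g (i, q) * prodW d W k (b, q)))"
    unfolding grad_prefix_def using assms
    by (intro sum.cong) (simp_all add: prodW_Suc_apply sum_distrib_left mult_ac del: prodW.simps)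
  then show ?thesis
    unfolding grad_prefix_def by (simp add: sum.swap[of _ "{..<d 0}"] sum_distrib_left)
qed

lemma grad_suffix_Suc: "k < Suc H \<Longrightarrow> b < d k \<Longrightarrow>
   grad_suffix d H g W k b q = (\<Sum>a<d (Suc k). W (Suc k, a, b) * grad_suffix d H g W (Suc k) a q)"
  unfolding grad_suffix_def
  by (simp add: tail_prod_step_apply sum_distrib_left sum_distrib_right mult_ac
      sum.swap[of _ "{..<d (Suc k)}"])

lemma layer_grad_eq_prefix:
  "layer_grad d H g W (Suc k) a b = (\<Sum>i<d (Suc H). tail_prod d W (Suc H) (Suc k) (i, a) * grad_prefix d g W k i b)"
  unfolding layer_grad_def grad_prefix_def by (simp add: sum_distrib_left mult_ac)

lemma layer_grad_eq_suffix:
  "layer_grad d H g W (Suc k) a b = (\<Sum>q<d 0. grad_suffix d H g W (Suc k) a q * prodW d W k (b, q))"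
  unfolding layer_grad_def grad_suffix_def
  by (simp add: sum_distrib_left sum_distrib_right mult_ac sum.swap[of _ "{..<d 0}"])

definition prodW_partial :: "(nat \<Rightarrow> nat) \<Rightarrow> (nat \<times> nat \<times> nat \<Rightarrow> real) \<Rightarrow> nat \<Rightarrow> nat \<Rightarrow> nat \<Rightarrow> nat \<Rightarrow> nat \<times> nat \<Rightarrow> real" where
  "prodW_partial d W N j a b = (\<lambda>(i, q).
     if i < d N \<and> q < d 0 then tail_prod d W N j (i, a) * prodW d W (j - 1) (b, q) else 0)"

lemma prodW_add_single_entry:
  assumes "1 \<le> j" "j \<le> N" "a < d j" "b < d (j - 1)"
  shows "prodW d (add_layer W j (\<lambda>x. if x = (a, b) then c else 0)) N =
    (\<lambda>x. prodW d W N x + c * prodW_partial d W N j a b x)"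
proof -
  define E where "E = (\<lambda>x. if x = (a, b) then c else (0::real))"
  define P where "P = prodW d W (j - 1)"
  define T where "T = tail_prod d W N j"
  have "(\<Sum>r<d (j - 1). E (l, r) * P (r, q)) = (if l = a then c * P (b, q) else 0)" for l q
    using assms(4) by (cases "l = a") (simp_all add: E_def if_distrib[of "\<lambda>x. x * _"] cong: if_cong)
  then have inner: "mmul (d j) (d (j - 1)) (d 0) E P (l, q) = (if l = a \<and> q < d 0 then c * P (b, q) else 0)"
    for l q using assms(3) unfolding mmul_apply by auto
  have "mmul (d N) (d j) (d 0) T (mmul (d j) (d (j - 1)) (d 0) E P) (i, q) =
    c * prodW_partial d W N j a b (i, q)" for i q
  proof (cases "i < d N \<and> q < d 0")
    case True
    then have "mmul (d N) (d j) (d 0) T (mmul (d j) (d (j - 1)) (d 0) E P) (i, q) =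
        (\<Sum>l<d j. T (i, l) * (if l = a then c * P (b, q) else 0))"
      unfolding mmul_apply[of "d N"] inner by simp
    also have "\<dots> = c * (T (i, a) * P (b, q))"
      using assms(3) by (simp add: if_distrib[of "\<lambda>x. _ * x"] cong: if_cong)
    finally show ?thesis using True by (simp add: prodW_partial_def P_def T_def)
  qed (auto simp: mmul_apply prodW_partial_def)
  then show ?thesis unfolding prodW_add_layer[OF assms(1,2)] E_def P_def T_def by auto
qed

lemma prodW_partial_in_sp: "prodW_partial d W N j a b \<in> sp (MI (d N) (d 0))"
  unfolding sp_def MI_def prodW_partial_def by auto

lemma ip_prodW_partial:
  "ip (MI (d (Suc H)) (d 0)) g (prodW_partial d W (Suc H) j a b) = layer_grad d H g W j a b"
proof -
  have "MI (d (Suc H)) (d 0) = {..<d (Suc H)} \<times> {..<d 0}" unfolding MI_def by auto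
  then have "ip (MI (d (Suc H)) (d 0)) g (prodW_partial d W (Suc H) j a b) =
      (\<Sum>i<d (Suc H). \<Sum>q<d 0. g (i, q) * prodW_partial d W (Suc H) j a b (i, q))"
    unfolding ip_def sum.cartesian_product by (simp add: case_prod_unfold)
  also have "\<dots> = layer_grad d H g W j a b"
    unfolding layer_grad_def prodW_partial_def by (intro sum.cong) (auto simp: mult_ac)
  finally show ?thesis .
qed

section \<open>Moving within a fibre of the product map\<close>

lemma tail_prod_eq_from_Suc:
  assumes "k < N" "tail_prod d W' N (Suc k) = tail_prod d W N (Suc k)"
    and "\<And>i l. W' (Suc k, i, l) = W (Suc k, i, l)"
  shows "tail_prod d W' N k = tail_prod d W N k"
  using assms layer_cong[of W' "Suc k" W] by (simp add: tail_prod_step)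

lemma sum_add_single:
  fixes f h :: "nat \<Rightarrow> real"
  shows "l0 < n \<Longrightarrow> (\<Sum>b<n. (f b + (if b = l0 then c else 0)) * h b) = (\<Sum>b<n. f b * h b) + c * h l0"
  by (simp add: distrib_right sum.distrib if_distrib[of "\<lambda>x. x * _"] cong: if_cong)

text \<open>Case d (H+1) \<le> d j: if the layer gradient at layer n+1 vanishes although
  g W_(n:1)^T does not, then W_(H+1:n+1) has a kernel vector z, and adding a
  small multiple of z e_l0^T to layer n+1 leaves W_(H+1:n+1) W_(n+1) unchanged
  while making g W_(n+1:1)^T nonzero.\<close>
lemma perturb_layer_to_prefix:
  assumes W: "W \<in> sp (PI d H)" and e: "\<epsilon> > 0" and n: "n < Suc H"
    and dle: "d (Suc H) \<le> d (Suc n)" and i0: "i0 < d (Suc H)" and l0: "l0 < d n"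
    and G: "grad_prefix d g W n i0 l0 \<noteq> 0"
    and G'0: "\<forall>a<d (Suc n). grad_prefix d g W (Suc n) i0 a = 0"
    and grad0: "\<forall>a<d (Suc n). layer_grad d H g W (Suc n) a l0 = 0"
  shows "\<exists>W2. W2 \<in> sp (PI d H) \<and> nrm (PI d H) (W2 - W) < \<epsilon> \<and>
     (\<forall>j i l. j \<noteq> Suc n \<longrightarrow> W2 (j, i, l) = W (j, i, l)) \<and>
     tail_prod d W2 (Suc H) n = tail_prod d W (Suc H) n \<and>
     (\<exists>a<d (Suc n). grad_prefix d g W2 (Suc n) i0 a \<noteq> 0)"
proof -
  define T where "T = tail_prod d W (Suc H) (Suc n)"
  have "\<forall>a<d (Suc n). (\<Sum>i<d (Suc H). grad_prefix d g W n i l0 * T (i, a)) = 0"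
    using grad0 unfolding layer_grad_eq_prefix T_def by (simp add: mult_ac)
  then obtain z where z: "\<forall>a. \<not> a < d (Suc n) \<longrightarrow> z a = 0" "\<exists>a<d (Suc n). z a \<noteq> 0"
      "\<forall>i<d (Suc H). (\<Sum>a<d (Suc n). T (i, a) * z a) = 0"
    using kernel_vector_of_dependent_rows[OF dle i0, of "\<lambda>i. grad_prefix d g W n i l0"] G by blast
  define E where "E = (\<lambda>(a, b). if b = l0 then z a else 0)"
  have E_sp: "E \<in> sp (MI (d (Suc n)) (d (Suc n - 1)))" using z(1) l0 unfolding sp_def MI_def E_def by auto
  obtain \<eta> where \<eta>: "\<eta> > 0" and W2_sp: "add_layer W (Suc n) (\<lambda>x. \<eta> * E x) \<in> sp (PI d H)"
      and near: "nrm (PI d H) (add_layer W (Suc n) (\<lambda>x. \<eta> * E x) - W) < \<epsilon>"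
    using exists_small_add_layer[OF W _ _ E_sp e] n by auto
  define W2 where "W2 = add_layer W (Suc n) (\<lambda>x. \<eta> * E x)"
  have same: "\<forall>j i l. j \<noteq> Suc n \<longrightarrow> W2 (j, i, l) = W (j, i, l)" by (simp add: W2_def add_layer_apply)
  have tail: "tail_prod d W2 (Suc H) n (i, b) = tail_prod d W (Suc H) n (i, b)" for i b
  proof (cases "i < d (Suc H) \<and> b < d n")
    case True
    have "(\<Sum>a<d (Suc n). T (i, a) * (\<eta> * E (a, b))) = 0"
      using z(3) True
      by (cases "b = l0") (simp_all add: E_def sum_distrib_left[symmetric] mult.left_commute)
    then show ?thesis
      using True n by (simp add: tail_prod_step_apply W2_def add_layer_apply distrib_left sum.distrib
          tail_prod_add_layer_above T_def)
  qed (use n tail_prod_outside in auto)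
  obtain a1 where a1: "a1 < d (Suc n)" "z a1 \<noteq> 0" using z(2) by blast
  have "grad_prefix d g W2 (Suc n) i0 a1 = (\<Sum>b<d n. (W (Suc n, a1, b) + (if b = l0 then \<eta> * z a1 else 0)) * grad_prefix d g W n i0 b)"
    unfolding grad_prefix_Suc[where d = d and k = n, OF a1(1)] unfolding grad_prefix_def W2_def
    by (simp add: prodW_add_layer_below add_layer_apply E_def if_distrib[of "\<lambda>x. \<eta> * x"] cong: if_cong)
  also have "\<dots> = \<eta> * z a1 * grad_prefix d g W n i0 l0"
    using G'0 a1(1) l0 by (simp add: sum_add_single grad_prefix_Suc[symmetric])
  finally have "grad_prefix d g W2 (Suc n) i0 a1 \<noteq> 0" using \<eta>(1) a1(2) G by simp
  then show ?thesis using W2_sp near same tail a1(1) unfolding W2_def by (intro exI) (auto simp: fun_eq_iff)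
qed

text \<open>Case d 0 \<le> d j, the mirror image of the previous lemma: a kernel vector z of
  W_(n:1)^T gives the perturbation e_a0 z^T of layer n+1, which leaves W_(n+1:1)
  unchanged while making W_(H+1:n+1)^T g nonzero.\<close>
lemma perturb_layer_to_suffix:
  assumes W: "W \<in> sp (PI d H)" and e: "\<epsilon> > 0" and n: "1 \<le> n" "n < Suc H"
    and dle: "d 0 \<le> d n" and a0: "a0 < d (Suc n)" and q0: "q0 < d 0"
    and M: "grad_suffix d H g W (Suc n) a0 q0 \<noteq> 0"
    and M'0: "\<forall>b<d n. grad_suffix d H g W n b q0 = 0"
    and grad0: "\<forall>b<d n. layer_grad d H g W (Suc n) a0 b = 0"
  shows "\<exists>W2. W2 \<in> sp (PI d H) \<and> nrm (PI d H) (W2 - W) < \<epsilon> \<and>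
     (\<forall>j i l. j \<noteq> Suc n \<longrightarrow> W2 (j, i, l) = W (j, i, l)) \<and>
     prodW d W2 (Suc n) = prodW d W (Suc n) \<and>
     (\<exists>b<d n. grad_suffix d H g W2 n b q0 \<noteq> 0)"
proof -
  define V where "V = prodW d W n"
  have "\<forall>b<d n. (\<Sum>q<d 0. grad_suffix d H g W (Suc n) a0 q * V (b, q)) = 0"
    using grad0 unfolding layer_grad_eq_suffix V_def by simp
  then obtain z where z: "\<forall>b. \<not> b < d n \<longrightarrow> z b = 0" "\<exists>b<d n. z b \<noteq> 0"
      "\<forall>q<d 0. (\<Sum>b<d n. V (b, q) * z b) = 0"
    using kernel_vector_of_dependent_rows[OF dle q0, of "\<lambda>q. grad_suffix d H g W (Suc n) a0 q"
        "\<lambda>p. V (snd p, fst p)"] M by auto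
  define E where "E = (\<lambda>(a, b). if a = a0 then z b else 0)"
  have E_sp: "E \<in> sp (MI (d (Suc n)) (d (Suc n - 1)))" using z(1) a0 unfolding sp_def MI_def E_def by auto
  obtain \<eta> where \<eta>: "\<eta> > 0" and W2_sp: "add_layer W (Suc n) (\<lambda>x. \<eta> * E x) \<in> sp (PI d H)"
      and near: "nrm (PI d H) (add_layer W (Suc n) (\<lambda>x. \<eta> * E x) - W) < \<epsilon>"
    using exists_small_add_layer[OF W _ _ E_sp e] n by auto
  define W2 where "W2 = add_layer W (Suc n) (\<lambda>x. \<eta> * E x)"
  have same: "\<forall>j i l. j \<noteq> Suc n \<longrightarrow> W2 (j, i, l) = W (j, i, l)" by (simp add: W2_def add_layer_apply)
  have prod: "prodW d W2 (Suc n) (a, q) = prodW d W (Suc n) (a, q)" for a q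
  proof (cases "a < d (Suc n) \<and> q < d 0")
    case True
    have "(\<Sum>b<d n. \<eta> * E (a, b) * V (b, q)) = 0"
      using z(3) True
      by (cases "a = a0") (simp_all add: E_def sum_distrib_left[symmetric] mult.assoc mult.commute)
    then show ?thesis
      using True by (simp add: prodW_Suc_apply W2_def add_layer_apply distrib_right sum.distrib
          prodW_add_layer_below V_def del: prodW.simps)
  qed (auto simp: prodW_outside simp del: prodW.simps)
  obtain b1 where b1: "b1 < d n" "z b1 \<noteq> 0" using z(2) by blast
  have "grad_suffix d H g W2 n b1 q0 = (\<Sum>a<d (Suc n). (W (Suc n, a, b1) + (if a = a0 then \<eta> * z b1 else 0)) * grad_suffix d H g W (Suc n) a q0)"
    unfolding grad_suffix_Suc[where d = d and k = n, OF n(2) b1(1)] unfolding grad_suffix_def W2_def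
    by (simp add: tail_prod_add_layer_above add_layer_apply E_def if_distrib[of "\<lambda>x. \<eta> * x"] cong: if_cong)
  also have "\<dots> = \<eta> * z b1 * grad_suffix d H g W (Suc n) a0 q0"
    using M'0 b1(1) a0 n(2) by (simp add: sum_add_single grad_suffix_Suc[symmetric])
  finally have "grad_suffix d H g W2 n b1 q0 \<noteq> 0" using \<eta>(1) b1(2) M by simp
  then show ?thesis using W2_sp near same prod b1(1) unfolding W2_def by (intro exI) (auto simp: fun_eq_iff)
qed

lemma nonzero_layer_grad_near_prefix:
  assumes widths: "\<forall>j\<in>{1..H}. d (Suc H) \<le> d j" and "k \<le> H"
    and "W \<in> sp (PI d H)" "\<epsilon> > 0" "i0 < d (Suc H)" "l0 < d k" "grad_prefix d g W k i0 l0 \<noteq> 0"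
  shows "\<exists>W'. W' \<in> sp (PI d H) \<and> nrm (PI d H) (W' - W) < \<epsilon> \<and>
     (\<forall>j i l. j \<le> k \<longrightarrow> W' (j, i, l) = W (j, i, l)) \<and>
     tail_prod d W' (Suc H) k = tail_prod d W (Suc H) k \<and> has_nonzero_layer_grad d H g W'"
  using assms(2-)
proof (induction k arbitrary: W \<epsilon> i0 l0 rule: inc_induct)
  case base
  have "layer_grad d H g W (Suc H) i0 l0 = grad_prefix d g W H i0 l0"
    unfolding layer_grad_eq_prefix tail_prod_self idm_commute[of _ _ i0]
    using base.prems(3) by (rule sum_idm_left)
  then have "has_nonzero_layer_grad d H g W"
    unfolding has_nonzero_layer_grad_def using base.prems by force
  then show ?case using base.prems by (intro exI[of _ W]) (simp add: nrm_zero)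
next
  case (step n)
  note W = step.prems(1) and e = step.prems(2) and i0 = step.prems(3) and l0 = step.prems(4)
  have n: "n < Suc H" using step.hyps by simp
  consider (prefix) a where "a < d (Suc n)" "grad_prefix d g W (Suc n) i0 a \<noteq> 0"
    | (layer) a where "a < d (Suc n)" "layer_grad d H g W (Suc n) a l0 \<noteq> 0"
    | (neither) "\<forall>a<d (Suc n). grad_prefix d g W (Suc n) i0 a = 0"
        "\<forall>a<d (Suc n). layer_grad d H g W (Suc n) a l0 = 0"
    by blast
  then show ?case
  proof cases
    case prefix
    then obtain W' where W': "W' \<in> sp (PI d H)" "nrm (PI d H) (W' - W) < \<epsilon>"
        "\<forall>j i l. j \<le> Suc n \<longrightarrow> W' (j, i, l) = W (j, i, l)"
        "tail_prod d W' (Suc H) (Suc n) = tail_prod d W (Suc H) (Suc n)" "has_nonzero_layer_grad d H g W'"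
      using step.IH[OF W e i0] by blast
    moreover have "tail_prod d W' (Suc H) n = tail_prod d W (Suc H) n"
      using tail_prod_eq_from_Suc[OF n W'(4)] W'(3) by simp
    ultimately show ?thesis by (meson le_SucI)
  next
    case layer
    then have "has_nonzero_layer_grad d H g W"
      unfolding has_nonzero_layer_grad_def using l0 n by force
    then show ?thesis using W e by (intro exI[of _ W]) (simp add: nrm_zero)
  next
    case neither
    have dle: "d (Suc H) \<le> d (Suc n)" using widths step.hyps by auto
    have e2: "\<epsilon> / 2 > 0" using e by simp
    obtain W2 a where W2: "W2 \<in> sp (PI d H)" "nrm (PI d H) (W2 - W) < \<epsilon> / 2"
        "\<forall>j i l. j \<noteq> Suc n \<longrightarrow> W2 (j, i, l) = W (j, i, l)"
        "tail_prod d W2 (Suc H) n = tail_prod d W (Suc H) n"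
        and a: "a < d (Suc n)" "grad_prefix d g W2 (Suc n) i0 a \<noteq> 0"
      using perturb_layer_to_prefix[OF W e2 n dle i0 l0 step.prems(5) neither] by blast
    obtain W' where W': "W' \<in> sp (PI d H)" "nrm (PI d H) (W' - W2) < \<epsilon> / 2"
        "\<forall>j i l. j \<le> Suc n \<longrightarrow> W' (j, i, l) = W2 (j, i, l)"
        "tail_prod d W' (Suc H) (Suc n) = tail_prod d W2 (Suc H) (Suc n)" "has_nonzero_layer_grad d H g W'"
      using step.IH[OF W2(1) e2 i0 a] by blast
    have "nrm (PI d H) (W' - W) < \<epsilon>"
      using nrm_diff_triangle[of "PI d H" W' W W2] W'(2) W2(2) by simp
    moreover have "tail_prod d W' (Suc H) n = tail_prod d W (Suc H) n"
      using tail_prod_eq_from_Suc[OF n W'(4)] W'(3) W2(4) by simp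
    ultimately show ?thesis using W' W2(3) by (metis Suc_n_not_le_n le_SucI)
  qed
qed

lemma nonzero_layer_grad_near_suffix:
  assumes widths: "\<forall>j\<in>{1..H}. d 0 \<le> d j" and "1 \<le> k" "k \<le> Suc H"
    and "W \<in> sp (PI d H)" "\<epsilon> > 0" "a0 < d k" "q0 < d 0" "grad_suffix d H g W k a0 q0 \<noteq> 0"
  shows "\<exists>W'. W' \<in> sp (PI d H) \<and> nrm (PI d H) (W' - W) < \<epsilon> \<and>
     (\<forall>j i l. k < j \<longrightarrow> W' (j, i, l) = W (j, i, l)) \<and>
     prodW d W' k = prodW d W k \<and> has_nonzero_layer_grad d H g W'"
  using assms(2-)
proof (induction k arbitrary: W \<epsilon> a0 rule: dec_induct)
  case base
  have "layer_grad d H g W 1 a0 q0 = grad_suffix d H g W 1 a0 q0"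
    using layer_grad_eq_suffix[of d H g W 0 a0 q0] base.prems(5)
    by (simp add: idm_commute[of _ q0] sum_idm_right)
  then have "has_nonzero_layer_grad d H g W"
    unfolding has_nonzero_layer_grad_def using base.prems by force
  then show ?case using base.prems by (intro exI[of _ W]) (simp add: nrm_zero)
next
  case (step n)
  note W = step.prems(2) and e = step.prems(3) and a0 = step.prems(4) and q0 = step.prems(5)
  have n: "1 \<le> n" "n < Suc H" using step.hyps step.prems by auto
  consider (suffix) b where "b < d n" "grad_suffix d H g W n b q0 \<noteq> 0"
    | (layer) b where "b < d n" "layer_grad d H g W (Suc n) a0 b \<noteq> 0"
    | (neither) "\<forall>b<d n. grad_suffix d H g W n b q0 = 0"
        "\<forall>b<d n. layer_grad d H g W (Suc n) a0 b = 0"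
    by blast
  then show ?case
  proof cases
    case suffix
    then obtain W' where W': "W' \<in> sp (PI d H)" "nrm (PI d H) (W' - W) < \<epsilon>"
        "\<forall>j i l. n < j \<longrightarrow> W' (j, i, l) = W (j, i, l)"
        "prodW d W' n = prodW d W n" "has_nonzero_layer_grad d H g W'"
      using step.IH[OF less_imp_le[OF n(2)] W e _ q0] by blast
    moreover have "layer W' (Suc n) = layer W (Suc n)" by (rule layer_cong) (simp add: W'(3))
    ultimately show ?thesis by (metis Suc_lessD prodW.simps(2))
  next
    case layer
    then have "has_nonzero_layer_grad d H g W"
      unfolding has_nonzero_layer_grad_def using a0 n by force
    then show ?thesis using W e by (intro exI[of _ W]) (simp add: nrm_zero)
  next
    case neither
    have dle: "d 0 \<le> d n" using widths n by auto
    have e2: "\<epsilon> / 2 > 0" using e by simp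
    obtain W2 b where W2: "W2 \<in> sp (PI d H)" "nrm (PI d H) (W2 - W) < \<epsilon> / 2"
        "\<forall>j i l. j \<noteq> Suc n \<longrightarrow> W2 (j, i, l) = W (j, i, l)" "prodW d W2 (Suc n) = prodW d W (Suc n)"
        and b: "b < d n" "grad_suffix d H g W2 n b q0 \<noteq> 0"
      using perturb_layer_to_suffix[OF W e2 n dle a0 q0 step.prems(6) neither] by blast
    obtain W' where W': "W' \<in> sp (PI d H)" "nrm (PI d H) (W' - W2) < \<epsilon> / 2"
        "\<forall>j i l. n < j \<longrightarrow> W' (j, i, l) = W2 (j, i, l)"
        "prodW d W' n = prodW d W2 n" "has_nonzero_layer_grad d H g W'"
      using step.IH[OF less_imp_le[OF n(2)] W2(1) e2 b(1) q0 b(2)] by blast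
    have "nrm (PI d H) (W' - W) < \<epsilon>"
      using nrm_diff_triangle[of "PI d H" W' W W2] W'(2) W2(2) by simp
    moreover have "layer W' (Suc n) = layer W2 (Suc n)" by (rule layer_cong) (simp add: W'(3))
    then have "prodW d W' (Suc n) = prodW d W (Suc n)" using W'(4) W2(4) by simp
    ultimately show ?thesis using W' W2(3) by (metis Suc_lessD less_not_refl)
  qed
qed

lemma nonzero_layer_grad_near_same_product:
  assumes widths: "\<forall>j\<in>{1..H}. min (d 0) (d (Suc H)) \<le> d j"
    and W: "W \<in> sp (PI d H)" and g: "g \<in> sp (MI (d (Suc H)) (d 0))" "g \<noteq> (\<lambda>_. 0)" and e: "\<epsilon> > 0"
  shows "\<exists>W'. W' \<in> sp (PI d H) \<and> nrm (PI d H) (W' - W) < \<epsilon> \<and>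
    prodW d W' (Suc H) = prodW d W (Suc H) \<and> has_nonzero_layer_grad d H g W'"
proof -
  obtain i0 q0 where gi: "g (i0, q0) \<noteq> 0" using g(2) by (auto simp: fun_eq_iff)
  then have iq: "i0 < d (Suc H)" "q0 < d 0" using g(1) unfolding sp_def MI_def by auto
  show ?thesis
  proof (cases "d (Suc H) \<le> d 0")
    case True
    then have "\<forall>j\<in>{1..H}. d (Suc H) \<le> d j" using widths by auto
    moreover have "grad_prefix d g W 0 i0 q0 \<noteq> 0"
      using gi iq(2) by (simp add: grad_prefix_def idm_commute[of _ q0] sum_idm_right)
    ultimately obtain W' where W': "W' \<in> sp (PI d H)" "nrm (PI d H) (W' - W) < \<epsilon>"
        "tail_prod d W' (Suc H) 0 = tail_prod d W (Suc H) 0" "has_nonzero_layer_grad d H g W'"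
      using nonzero_layer_grad_near_prefix[of H d 0 W \<epsilon> i0 q0 g] W e iq by auto
    moreover have "prodW d W' (Suc H) = prodW d W (Suc H)"
      using prodW_eq_tail_prefix[of 0 "Suc H" d W'] prodW_eq_tail_prefix[of 0 "Suc H" d W] W'(3) by simp
    ultimately show ?thesis by blast
  next
    case False
    then have "\<forall>j\<in>{1..H}. d 0 \<le> d j" using widths by auto
    moreover have "grad_suffix d H g W (Suc H) i0 q0 \<noteq> 0"
      using gi iq(1) by (simp add: grad_suffix_def tail_prod_self idm_commute[of _ _ i0] sum_idm_left)
    ultimately show ?thesis
      using nonzero_layer_grad_near_suffix[of H d "Suc H" W \<epsilon> i0 q0 g] W e iq by auto
  qed
qed

lemma exists_near_lower_value:
  assumes widths: "\<forall>j\<in>{1..H}. min (d 0) (d (Suc H)) \<le> d j" and W: "W \<in> sp (PI d H)"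
    and grad: "has_grad (MI (d (Suc H)) (d 0)) f (prodW d W (Suc H)) g" and g0: "g \<noteq> (\<lambda>_. 0)"
    and \<delta>: "\<delta> > 0"
  shows "\<exists>V\<in>sp (PI d H). nrm (PI d H) (V - W) < \<delta> \<and> f (prodW d V (Suc H)) < f (prodW d W (Suc H))"
proof -
  have "g \<in> sp (MI (d (Suc H)) (d 0))" using grad unfolding has_grad_def by blast
  moreover have \<delta>2: "\<delta> / 2 > 0" using \<delta> by simp
  ultimately obtain W' where W': "W' \<in> sp (PI d H)" "nrm (PI d H) (W' - W) < \<delta> / 2"
      "prodW d W' (Suc H) = prodW d W (Suc H)" "has_nonzero_layer_grad d H g W'"
    using nonzero_layer_grad_near_same_product[OF widths W _ g0] by blast
  then obtain j a b where jab: "1 \<le> j" "j \<le> Suc H" "a < d j" "b < d (j - 1)"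
      and h: "layer_grad d H g W' j a b \<noteq> 0"
    unfolding has_nonzero_layer_grad_def by auto
  define D where "D = prodW_partial d W' (Suc H) j a b"
  have "ip (MI (d (Suc H)) (d 0)) g D \<noteq> 0" unfolding D_def ip_prodW_partial by (rule h)
  then obtain c where c: "\<bar>c\<bar> < \<delta> / 2" "f (\<lambda>x. prodW d W' (Suc H) x + c * D x) < f (prodW d W' (Suc H))"
    using has_grad_exists_lower[OF grad[folded W'(3)] prodW_in_sp prodW_partial_in_sp _ \<delta>2]
    unfolding D_def by blast
  define V where "V = add_layer W' j (\<lambda>x. if x = (a, b) then c else 0)"
  have "(\<lambda>x. if x = (a, b) then c else 0) \<in> sp (MI (d j) (d (j - 1)))"
    using jab unfolding sp_def MI_def by auto
  then have V_sp: "V \<in> sp (PI d H)" unfolding V_def using add_layer_in_sp[OF W'(1)] jab by simp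
  have "V - W' = (\<lambda>y. if y = (j, a, b) then c else 0)" by (auto simp: V_def add_layer_def fun_eq_iff)
  then have "nrm (PI d H) (V - W') < \<delta> / 2" using nrm_single_le[OF finite_PI] c(1) by (metis le_less_trans)
  then have "nrm (PI d H) (V - W) < \<delta>"
    using nrm_diff_triangle[of "PI d H" V W W'] W'(2) by simp
  moreover have "f (prodW d V (Suc H)) < f (prodW d W (Suc H))"
    using c(2) W'(3) unfolding V_def prodW_add_single_entry[OF jab] D_def by simp
  ultimately show ?thesis using V_sp by blast
qed

section \<open>Critical points of the deep linear loss\<close>

lemma saddle_if_outer_grad_nonzero:
  assumes widths: "\<forall>j\<in>{1..H}. min (d 0) (d (Suc H)) \<le> d j"
    and crit: "critical (PI d H) (\<lambda>V. f (prodW d V (Suc H))) W"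
    and grad: "has_grad (MI (d (Suc H)) (d 0)) f (prodW d W (Suc H)) g" and g0: "g \<noteq> (\<lambda>_. 0)"
  shows "saddle (PI d H) (\<lambda>V. f (prodW d V (Suc H))) W"
proof -
  have W: "W \<in> sp (PI d H)" using crit unfolding critical_def by simp
  have "\<not> local_min (PI d H) (\<lambda>V. f (prodW d V (Suc H))) W"
    unfolding local_min_def using exists_near_lower_value[OF widths W grad g0] by force
  moreover have "\<not> local_max (PI d H) (\<lambda>V. f (prodW d V (Suc H))) W"
  proof
    assume "local_max (PI d H) (\<lambda>V. f (prodW d V (Suc H))) W"
    then obtain \<delta> where \<delta>: "\<delta> > 0"
      and max: "\<forall>V\<in>sp (PI d H). nrm (PI d H) (V - W) < \<delta> \<longrightarrow> f (prodW d V (Suc H)) \<le> f (prodW d W (Suc H))"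
      unfolding local_max_def by blast
    have "- g \<noteq> (\<lambda>_. 0)" using g0 by (auto simp: fun_eq_iff)
    then obtain V where "V \<in> sp (PI d H)" "nrm (PI d H) (V - W) < \<delta>"
        "- f (prodW d V (Suc H)) < - f (prodW d W (Suc H))"
      using exists_near_lower_value[OF widths W has_grad_uminus[OF grad] _ \<delta>] by blast
    with max show False by force
  qed
  ultimately show ?thesis using crit unfolding saddle_def by simp
qed

lemma global_min_comp:
  "global_min J f (\<phi> W) \<Longrightarrow> W \<in> sp I \<Longrightarrow> (\<And>V. \<phi> V \<in> sp J) \<Longrightarrow> global_min I (\<lambda>V. f (\<phi> V)) W"
  unfolding global_min_def by blast

lemma global_max_comp:
  "global_max J f (\<phi> W) \<Longrightarrow> W \<in> sp I \<Longrightarrow> (\<And>V. \<phi> V \<in> sp J) \<Longrightarrow> global_max I (\<lambda>V. f (\<phi> V)) W"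
  unfolding global_max_def by blast

theorem corollary2:
  fixes H dx dy :: nat and d :: "nat \<Rightarrow> nat"
    and l0 :: "(nat \<times> nat \<Rightarrow> real) \<Rightarrow> real"
  assumes "H \<ge> 1"
    and "d 0 = dx" and "d (H + 1) = dy"
    and "\<forall>j\<in>{1..H}. d j \<ge> min dx dy"
    and "\<forall>M\<in>sp (MI dy dx). differentiable_at_sp (MI dy dx) l0 M"
  shows
    "((\<forall>M. critical (MI dy dx) l0 M \<longrightarrow> global_min (MI dy dx) l0 M) \<longrightarrow>
       (\<forall>W. critical (PI d H) (\<lambda>V. l0 (prodW d V (H + 1))) W \<longrightarrow>
          (grad (MI dy dx) l0 (prodW d W (H + 1)) \<noteq> (\<lambda>_. 0) \<longrightarrow>
             saddle (PI d H) (\<lambda>V. l0 (prodW d V (H + 1))) W) \<and>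
          (grad (MI dy dx) l0 (prodW d W (H + 1)) = (\<lambda>_. 0) \<longrightarrow>
             global_min (PI d H) (\<lambda>V. l0 (prodW d V (H + 1))) W)))
   \<and>
     ((\<forall>M. critical (MI dy dx) l0 M \<longrightarrow> global_max (MI dy dx) l0 M) \<longrightarrow>
       (\<forall>W. critical (PI d H) (\<lambda>V. l0 (prodW d V (H + 1))) W \<longrightarrow>
          (grad (MI dy dx) l0 (prodW d W (H + 1)) \<noteq> (\<lambda>_. 0) \<longrightarrow>
             saddle (PI d H) (\<lambda>V. l0 (prodW d V (H + 1))) W) \<and>
          (grad (MI dy dx) l0 (prodW d W (H + 1)) = (\<lambda>_. 0) \<longrightarrow>
             global_max (PI d H) (\<lambda>V. l0 (prodW d V (H + 1))) W)))"
proof -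
  let ?L = "\<lambda>V. l0 (prodW d V (H + 1))"
  have MI: "MI dy dx = MI (d (Suc H)) (d 0)" using assms(2,3) by simp
  have widths: "\<forall>j\<in>{1..H}. min (d 0) (d (Suc H)) \<le> d j" using assms(2-4) by simp
  have P_sp: "prodW d V (H + 1) \<in> sp (MI dy dx)" for V
    using prodW_in_sp[of d V "Suc H"] unfolding MI by simp
  have grad: "has_grad (MI dy dx) l0 (prodW d W (H + 1)) (grad (MI dy dx) l0 (prodW d W (H + 1)))" for W
    using has_grad_grad[OF finite_MI P_sp] assms(5) P_sp by blast
  have saddle: "saddle (PI d H) ?L W"
    if "critical (PI d H) ?L W" "grad (MI dy dx) l0 (prodW d W (H + 1)) \<noteq> (\<lambda>_. 0)" for W
    using saddle_if_outer_grad_nonzero[OF widths, of l0 W] grad[of W] that unfolding MI by simp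
  have crit: "critical (MI dy dx) l0 (prodW d W (H + 1))"
    if "grad (MI dy dx) l0 (prodW d W (H + 1)) = (\<lambda>_. 0)" for W
    using grad[of W] P_sp that unfolding critical_def by simp
  have W_sp: "critical (PI d H) ?L W \<Longrightarrow> W \<in> sp (PI d H)" for W
    unfolding critical_def by simp
  show ?thesis
    using saddle crit W_sp global_min_comp[where \<phi> = "\<lambda>V. prodW d V (H + 1)", OF _ _ P_sp]
      global_max_comp[where \<phi> = "\<lambda>V. prodW d V (H + 1)", OF _ _ P_sp] by meson
qed

end
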